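(* Let $P$ be a property of families of metric spaces that is inherited by subsets. Let $(I,\le)$ be a linearly ordered set and $(f_i:X_i\to Y_i)_{i\in I}$ an asymptotically faithful family of surjective maps between metric spaces such that the family $(X_i)_{i\in I}$ has property $P$. Then $(Y_i)_{i\in I}$ has property $P$ piecewise.
   Context: A property of families of metric spaces is invariant under isometries of members. $P$ is inherited by subsets if whenever a family $\mathcal{Y}$ has $P$, so does $\{A: A\subseteq Y\text{ for some }Y\in\mathcal{Y}\}$ (with restricted metrics). A family of surjections $(f_i:X_i\to Y_i)_{i\in I}$ is asymptotically faithful if for every $R\in\mathbb{N}$ there is $j\in I$ such that for all $i\ge j$ and $x\in X_i$ the restriction $f_i:B(x,R)\to B(f_i(x),R)$ is an isometry (onto). A family $(Y_i)_{i\in I}$ has property $P$ piecewise if for every $R\in\mathbb{N}$ there is $j(R)\in I$ such that the family $\bigcup_{R\in\mathbb{N}}\{A:A\subseteq Y_i\text{ for some }i\ge j(R),\ \operatorname{diam}A\le R\}$ has property $P$. *)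

theory Defs
  imports "HOL-Analysis.Analysis"
begin

definition isometric_spaces :: "'a metric \<Rightarrow> 'b metric \<Rightarrow> bool" where
  "isometric_spaces M N \<longleftrightarrow>
     (\<exists>g. bij_betw g (mspace M) (mspace N) \<and>
          (\<forall>x\<in>mspace M. \<forall>y\<in>mspace M. mdist N (g x) (g y) = mdist M x y))"

definition iso_families :: "'a metric set \<Rightarrow> 'b metric set \<Rightarrow> bool" where
  "iso_families F G \<longleftrightarrow>
     (\<forall>M\<in>F. \<exists>N\<in>G. isometric_spaces M N) \<and> (\<forall>N\<in>G. \<exists>M\<in>F. isometric_spaces M N)"

text \<open>A property of families, given by its instances P on spaces with points of
  type 'a and Q on spaces with points of type 'b, is invariant under isometries
  of members.\<close>
definition isometry_invariant ::
  "('a metric set \<Rightarrow> bool) \<Rightarrow> ('b metric set \<Rightarrow> bool) \<Rightarrow> bool" where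
  "isometry_invariant P Q \<longleftrightarrow>
     (\<forall>F G. iso_families F G \<longrightarrow> (P F \<longleftrightarrow> Q G))"

definition inherited_by_subsets :: "('a metric set \<Rightarrow> bool) \<Rightarrow> bool" where
  "inherited_by_subsets P \<longleftrightarrow>
     (\<forall>F \<A>. P F \<longrightarrow>
        (\<forall>A\<in>\<A>. \<exists>Y\<in>F. \<exists>S. S \<subseteq> mspace Y \<and> A = submetric Y S) \<longrightarrow> P \<A>)"

definition ball_isometry :: "'a metric \<Rightarrow> 'b metric \<Rightarrow> ('a \<Rightarrow> 'b) \<Rightarrow> 'a \<Rightarrow> real \<Rightarrow> bool" where
  "ball_isometry X Y f x R \<longleftrightarrow>
     bij_betw f (mcball_of X x R) (mcball_of Y (f x) R) \<and>
     (\<forall>u\<in>mcball_of X x R. \<forall>v\<in>mcball_of X x R. mdist Y (f u) (f v) = mdist X u v)"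

definition asymptotically_faithful ::
  "('i::linorder) set \<Rightarrow> ('i \<Rightarrow> 'a metric) \<Rightarrow> ('i \<Rightarrow> 'b metric) \<Rightarrow> ('i \<Rightarrow> 'a \<Rightarrow> 'b) \<Rightarrow> bool" where
  "asymptotically_faithful I X Y f \<longleftrightarrow>
     (\<forall>R::nat. \<exists>j\<in>I. \<forall>i\<in>I. j \<le> i \<longrightarrow>
        (\<forall>x\<in>mspace (X i). ball_isometry (X i) (Y i) (f i) x (real R)))"

definition diam_le :: "'a metric \<Rightarrow> 'a set \<Rightarrow> real \<Rightarrow> bool" where
  "diam_le M A R \<longleftrightarrow> (\<forall>x\<in>A. \<forall>y\<in>A. mdist M x y \<le> R)"

definition has_property_piecewise ::
  "('b metric set \<Rightarrow> bool) \<Rightarrow> ('i::linorder) set \<Rightarrow> ('i \<Rightarrow> 'b metric) \<Rightarrow> bool" where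
  "has_property_piecewise Q I Y \<longleftrightarrow>
     (\<exists>j::nat \<Rightarrow> 'i. (\<forall>R. j R \<in> I) \<and>
        Q (\<Union>R::nat. {submetric (Y i) A | i A.
              i \<in> I \<and> j R \<le> i \<and> A \<subseteq> mspace (Y i) \<and> diam_le (Y i) A (real R)}))"

end

theory Submission
  imports Defs
begin

text \<open>A subset of diameter at most R of Y_i lies in the closed R-ball around any of its
  points. For large i every such ball is an isometric image of an R-ball of X_i, so the
  subset is isometric to a subspace of X_i. Hence the family of small subsets of the
  late Y_i is, up to isometry, a family of subspaces of members of (X_i), and inherits P.\<close>

lemma diam_le_subset_mcball:
  assumes "A \<subseteq> mspace M" and "diam_le M A R" and "y \<in> A"
  shows "A \<subseteq> mcball_of M y R"
  using assms unfolding diam_le_def by auto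

lemma isometric_spaces_empty: "isometric_spaces (submetric M {}) (submetric N {})"
  unfolding isometric_spaces_def by (auto simp: bij_betw_def)

lemma ball_isometry_subset_isometric:
  assumes iso: "ball_isometry X Y f x R" and A: "A \<subseteq> mcball_of Y (f x) R"
  shows "isometric_spaces (submetric X (mcball_of X x R \<inter> f -` A)) (submetric Y A)"
proof -
  define S where "S = mcball_of X x R \<inter> f -` A"
  have bij: "bij_betw f (mcball_of X x R) (mcball_of Y (f x) R)"
    and dist: "\<forall>u\<in>mcball_of X x R. \<forall>v\<in>mcball_of X x R. mdist Y (f u) (f v) = mdist X u v"
    using iso unfolding ball_isometry_def by auto
  have "f ` S = A"
  proof
    show "A \<subseteq> f ` S"
    proof
      fix a assume "a \<in> A"
      then have "a \<in> f ` mcball_of X x R"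
        using A bij by (auto simp: bij_betw_def)
      then show "a \<in> f ` S"
        using \<open>a \<in> A\<close> by (auto simp: S_def)
    qed
  qed (auto simp: S_def)
  then have "bij_betw f S A"
    using bij_betw_subset[OF bij] by (simp add: S_def)
  moreover have "S \<inter> mspace X = S" and "A \<inter> mspace Y = A"
    using A by (auto simp: S_def)
  moreover have "\<forall>u\<in>S. \<forall>v\<in>S. mdist Y (f u) (f v) = mdist X u v"
    using dist by (simp add: S_def)
  ultimately show ?thesis
    unfolding isometric_spaces_def S_def[symmetric] by (intro exI[of _ f]) simp
qed

lemma diam_le_isometric_to_subspace:
  assumes surj: "f ` mspace X = mspace Y"
    and iso: "\<And>x. x \<in> mspace X \<Longrightarrow> ball_isometry X Y f x R"
    and A: "A \<subseteq> mspace Y" and diam: "diam_le Y A R"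
  shows "\<exists>S\<subseteq>mspace X. isometric_spaces (submetric X S) (submetric Y A)"
proof (cases "A = {}")
  case True
  then show ?thesis
    using isometric_spaces_empty by blast
next
  case False
  then obtain x where x: "x \<in> mspace X" "f x \<in> A"
    using A surj by force
  have "A \<subseteq> mcball_of Y (f x) R"
    using diam_le_subset_mcball[OF A diam x(2)] .
  then have "isometric_spaces (submetric X (mcball_of X x R \<inter> f -` A)) (submetric Y A)"
    using ball_isometry_subset_isometric[OF iso[OF x(1)]] by blast
  moreover have "mcball_of X x R \<inter> f -` A \<subseteq> mspace X"
    by auto
  ultimately show ?thesis
    by blast
qed

lemma isometry_invariant_subspaces:
  assumes inherited: "inherited_by_subsets P" and invariant: "isometry_invariant P Q"
    and "P \<F>"
    and lift: "\<And>N. N \<in> \<G> \<Longrightarrow> \<exists>M\<in>\<F>. \<exists>S\<subseteq>mspace M. isometric_spaces (submetric M S) N"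
  shows "Q \<G>"
proof -
  \<comment> \<open>Only the subspaces matched by some member of \<G> are kept, since
    iso_families demands a correspondence in both directions.\<close>
  define \<H> where "\<H> = {K. (\<exists>N\<in>\<G>. isometric_spaces K N) \<and>
      (\<exists>M\<in>\<F>. \<exists>S. S \<subseteq> mspace M \<and> K = submetric M S)}"
  have "\<forall>K\<in>\<H>. \<exists>M\<in>\<F>. \<exists>S. S \<subseteq> mspace M \<and> K = submetric M S"
    unfolding \<H>_def by blast
  with inherited \<open>P \<F>\<close> have "P \<H>"
    unfolding inherited_by_subsets_def by blast
  have "\<exists>K\<in>\<H>. isometric_spaces K N" if N: "N \<in> \<G>" for N
  proof -
    obtain M S where "M \<in> \<F>" "S \<subseteq> mspace M" "isometric_spaces (submetric M S) N"
      using lift[OF N] by blast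
    with N have "submetric M S \<in> \<H>"
      unfolding \<H>_def by blast
    with \<open>isometric_spaces (submetric M S) N\<close> show ?thesis
      by blast
  qed
  then have "iso_families \<H> \<G>"
    unfolding iso_families_def \<H>_def by blast
  with invariant \<open>P \<H>\<close> show ?thesis
    unfolding isometry_invariant_def by blast
qed

lemma asymptotically_faithfulE:
  assumes "asymptotically_faithful I X Y f"
  obtains j where "\<And>R. j R \<in> I"
    and "\<And>R i x. i \<in> I \<Longrightarrow> j R \<le> i \<Longrightarrow> x \<in> mspace (X i) \<Longrightarrow>
           ball_isometry (X i) (Y i) (f i) x (real R)"
  using assms unfolding asymptotically_faithful_def by metis

theorem lemma6p5:
  fixes P :: "'a metric set \<Rightarrow> bool" and Q :: "'b metric set \<Rightarrow> bool"
    and I :: "'i::linorder set"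
    and X :: "'i \<Rightarrow> 'a metric" and Y :: "'i \<Rightarrow> 'b metric" and f :: "'i \<Rightarrow> 'a \<Rightarrow> 'b"
  assumes "isometry_invariant P P" and "isometry_invariant Q Q"
    and "isometry_invariant P Q"
    and "inherited_by_subsets P" and "inherited_by_subsets Q"
    and "\<And>i. i \<in> I \<Longrightarrow> f i \<in> mspace (X i) \<rightarrow> mspace (Y i)"
    and "\<And>i. i \<in> I \<Longrightarrow> f i ` mspace (X i) = mspace (Y i)"
    and "asymptotically_faithful I X Y f"
    and "P (X ` I)"
  shows "has_property_piecewise Q I Y"
proof -
  obtain j where j_in: "\<And>R. j R \<in> I"
    and j_iso: "\<And>R i x. i \<in> I \<Longrightarrow> j R \<le> i \<Longrightarrow> x \<in> mspace (X i) \<Longrightarrow>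
                  ball_isometry (X i) (Y i) (f i) x (real R)"
    using asymptotically_faithfulE[OF assms(8)] by blast
  let ?\<G> = "\<Union>R::nat. {submetric (Y i) A | i A.
              i \<in> I \<and> j R \<le> i \<and> A \<subseteq> mspace (Y i) \<and> diam_le (Y i) A (real R)}"
  have "\<exists>M\<in>X ` I. \<exists>S\<subseteq>mspace M. isometric_spaces (submetric M S) N" if "N \<in> ?\<G>" for N
  proof -
    from that obtain R i A where "N = submetric (Y i) A" "i \<in> I" "j R \<le> i"
      and "A \<subseteq> mspace (Y i)" "diam_le (Y i) A (real R)"
      by blast
    then show ?thesis
      using diam_le_isometric_to_subspace[OF assms(7) j_iso] by blast
  qed
  then have "Q ?\<G>"
    using isometry_invariant_subspaces[OF assms(4,3,9)] by blast
  then show ?thesis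
    unfolding has_property_piecewise_def using j_in by blast
qed

end
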